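(* Every compact metric space, viewed as a structure in the metric signature, has Scott rank at most $\omega$.
   Context: A metric space $(X,d)$ is viewed as a first-order structure in the signature $\{R_q : q\in\mathbb{Q}^+\}$ of binary relation symbols, where $R_q(x,y)$ holds iff $d(x,y)<q$. For a structure $M$ and finite tuples $\bar a,\bar b$ of the same length from $M$, define $\bar a\equiv_\alpha\bar b$ by induction on ordinals $\alpha$: $\bar a\equiv_0\bar b$ iff $\bar a,\bar b$ have the same quantifier-free type; for limit $\alpha$, $\bar a\equiv_\alpha\bar b$ iff $\bar a\equiv_\beta\bar b$ for all $\beta<\alpha$; $\bar a\equiv_{\alpha+1}\bar b$ iff for every $x\in M$ there is $y\in M$ with $\bar a x\equiv_\alpha\bar b y$, and for every $y\in M$ there is $x\in M$ with $\bar a x\equiv_\alpha \bar b y$. The Scott rank of $M$ is the least ordinal $\alpha$ such that for all finite tuples $\bar a,\bar b$ from $M$, $\bar a\equiv_\alpha\bar b$ implies $\bar a\equiv_{\alpha+1}\bar b$. *)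

theory Defs
  imports "HOL-Analysis.Analysis"
begin

text \<open>A metric space (M,d) as a structure in the signature of binary relation symbols
  R_q (q a positive rational), R_q(x,y) iff d(x,y) < q (plus equality).
  Finite tuples are lists of elements of M.\<close>

definition qf_equiv :: "('a \<Rightarrow> 'a \<Rightarrow> real) \<Rightarrow> 'a list \<Rightarrow> 'a list \<Rightarrow> bool" where
  "qf_equiv d as bs \<longleftrightarrow> length as = length bs \<and>
     (\<forall>i < length as. \<forall>j < length as.
        (as ! i = as ! j \<longleftrightarrow> bs ! i = bs ! j) \<and>
        (\<forall>q::rat. q > 0 \<longrightarrow> (d (as ! i) (as ! j) < of_rat q \<longleftrightarrow> d (bs ! i) (bs ! j) < of_rat q)))"

fun bf_equiv :: "'a set \<Rightarrow> ('a \<Rightarrow> 'a \<Rightarrow> real) \<Rightarrow> nat \<Rightarrow> 'a list \<Rightarrow> 'a list \<Rightarrow> bool" where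
  "bf_equiv M d 0 as bs = qf_equiv d as bs"
| "bf_equiv M d (Suc n) as bs =
     ((\<forall>x\<in>M. \<exists>y\<in>M. bf_equiv M d n (as @ [x]) (bs @ [y])) \<and>
      (\<forall>y\<in>M. \<exists>x\<in>M. bf_equiv M d n (as @ [x]) (bs @ [y])))"

definition bf_equiv_omega :: "'a set \<Rightarrow> ('a \<Rightarrow> 'a \<Rightarrow> real) \<Rightarrow> 'a list \<Rightarrow> 'a list \<Rightarrow> bool" where
  "bf_equiv_omega M d as bs \<longleftrightarrow> (\<forall>n. bf_equiv M d n as bs)"

definition bf_equiv_omega_plus1 :: "'a set \<Rightarrow> ('a \<Rightarrow> 'a \<Rightarrow> real) \<Rightarrow> 'a list \<Rightarrow> 'a list \<Rightarrow> bool" where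
  "bf_equiv_omega_plus1 M d as bs \<longleftrightarrow>
     (\<forall>x\<in>M. \<exists>y\<in>M. bf_equiv_omega M d (as @ [x]) (bs @ [y])) \<and>
     (\<forall>y\<in>M. \<exists>x\<in>M. bf_equiv_omega M d (as @ [x]) (bs @ [y]))"

text \<open>Scott rank at most \<omega>: the least ordinal \<alpha> with (\<equiv>_\<alpha> implies \<equiv>_{\<alpha>+1} for all tuples)
  is \<le> \<omega>, i.e. some \<alpha> \<in> {0,1,2,...} \<union> {\<omega>} has this property.\<close>
definition scott_rank_le_omega :: "'a set \<Rightarrow> ('a \<Rightarrow> 'a \<Rightarrow> real) \<Rightarrow> bool" where
  "scott_rank_le_omega M d \<longleftrightarrow>
     (\<exists>n::nat. \<forall>as bs. set as \<subseteq> M \<longrightarrow> set bs \<subseteq> M \<longrightarrow>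
        bf_equiv M d n as bs \<longrightarrow> bf_equiv M d (Suc n) as bs) \<or>
     (\<forall>as bs. set as \<subseteq> M \<longrightarrow> set bs \<subseteq> M \<longrightarrow>
        bf_equiv_omega M d as bs \<longrightarrow> bf_equiv_omega_plus1 M d as bs)"

end

theory Submission
  imports Defs
begin

text \<open>In a compact metric space each relation \<open>\<equiv>\<^sub>n\<close>, viewed as a relation between tuples of
  points, is closed: quantifier-free types are determined by the distance matrix, which depends
  continuously on the tuple, and the back-and-forth step survives limits because witnesses can be
  chosen along a convergent subsequence. Now let \<open>as \<equiv>\<^sub>\<omega> bs\<close> and \<open>x \<in> M\<close>. For every \<open>n\<close> pick
  \<open>y\<^sub>n\<close> with \<open>as x \<equiv>\<^sub>n bs y\<^sub>n\<close> and let \<open>y\<close> be a limit of a subsequence. Since the relations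
  \<open>\<equiv>\<^sub>n\<close> decrease with \<open>n\<close>, for fixed \<open>m\<close> almost all terms of that subsequence satisfy
  \<open>as x \<equiv>\<^sub>m bs y\<^sub>n\<close>, so closedness gives \<open>as x \<equiv>\<^sub>m bs y\<close> for all \<open>m\<close>, i.e. \<open>as x \<equiv>\<^sub>\<omega> bs y\<close>.\<close>

lemma qf_equiv_sym: "qf_equiv d as bs \<Longrightarrow> qf_equiv d bs as"
  unfolding qf_equiv_def by auto

lemma qf_equiv_snocD: "qf_equiv d (as @ [x]) (bs @ [y]) \<Longrightarrow> qf_equiv d as bs"
  unfolding qf_equiv_def
proof (elim conjE, intro conjI allI impI)
  assume len: "length (as @ [x]) = length (bs @ [y])"
    and types: "\<forall>i<length (as @ [x]). \<forall>j<length (as @ [x]).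
      ((as @ [x]) ! i = (as @ [x]) ! j) = ((bs @ [y]) ! i = (bs @ [y]) ! j) \<and>
      (\<forall>q>0. (d ((as @ [x]) ! i) ((as @ [x]) ! j) < of_rat q) =
              (d ((bs @ [y]) ! i) ((bs @ [y]) ! j) < of_rat q))"
  then show "length as = length bs" by simp
  fix i j assume "i < length as" "j < length as"
  with len types[rule_format, of i j] show
    "(as ! i = as ! j) = (bs ! i = bs ! j)"
    "\<And>q. q > 0 \<Longrightarrow> (d (as ! i) (as ! j) < of_rat q) = (d (bs ! i) (bs ! j) < of_rat q)"
    by (simp_all add: nth_append)
qed

lemma bf_equiv_sym: "bf_equiv M d n as bs \<Longrightarrow> bf_equiv M d n bs as"
proof (induction n arbitrary: as bs)
  case (Suc n)
  from Suc.prems show ?case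
    by (simp only: bf_equiv.simps(2)) (meson Suc.IH)
qed (simp add: qf_equiv_sym)

lemma bf_equiv_Suc_iff:
  "bf_equiv M d (Suc n) as bs \<longleftrightarrow>
     (\<forall>x\<in>M. \<exists>y\<in>M. bf_equiv M d n (as @ [x]) (bs @ [y])) \<and>
     (\<forall>y\<in>M. \<exists>x\<in>M. bf_equiv M d n (bs @ [y]) (as @ [x]))"
  unfolding bf_equiv.simps(2) using bf_equiv_sym by blast

lemma bf_equiv_SucD:
  assumes "set as \<subseteq> M" "set bs \<subseteq> M" "bf_equiv M d (Suc n) as bs"
  shows "bf_equiv M d n as bs"
  using assms
proof (induction n arbitrary: as bs)
  case 0
  show ?case
  proof (cases "M = {}")
    case True
    with "0.prems"(1,2) have "as = []" "bs = []" by auto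
    then show ?thesis by (simp add: qf_equiv_def)
  next
    case False
    then obtain x where "x \<in> M" by blast
    with "0.prems"(3) obtain y where "qf_equiv d (as @ [x]) (bs @ [y])" by auto
    then show ?thesis by (simp add: qf_equiv_snocD)
  qed
next
  case (Suc n)
  have "bf_equiv M d n (as @ [x]) (bs @ [y])"
    if "x \<in> M" "y \<in> M" "bf_equiv M d (Suc n) (as @ [x]) (bs @ [y])" for x y
    using that Suc.prems(1,2) by (intro Suc.IH) auto
  with Suc.prems(3) show ?case
    unfolding bf_equiv.simps(2) by blast
qed

lemma bf_equiv_antimono:
  assumes "set as \<subseteq> M" "set bs \<subseteq> M" "m \<le> n" "bf_equiv M d n as bs"
  shows "bf_equiv M d m as bs"
  using assms(3,4)
  by (induction n rule: dec_induct) (metis bf_equiv_SucD assms(1,2))+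

lemma bf_equiv_omega_plus1_iff:
  "bf_equiv_omega_plus1 M d as bs \<longleftrightarrow>
     (\<forall>x\<in>M. \<exists>y\<in>M. bf_equiv_omega M d (as @ [x]) (bs @ [y])) \<and>
     (\<forall>y\<in>M. \<exists>x\<in>M. bf_equiv_omega M d (bs @ [y]) (as @ [x]))"
  unfolding bf_equiv_omega_plus1_def bf_equiv_omega_def using bf_equiv_sym by blast

lemma eq_if_same_positive_rat_bounds:
  fixes r s :: real
  assumes "\<And>q::rat. q > 0 \<Longrightarrow> r < of_rat q \<longleftrightarrow> s < of_rat q" "r \<ge> 0" "s \<ge> 0"
  shows "r = s"
proof -
  have False if "u < v" "u \<ge> 0" "\<And>q::rat. q > 0 \<Longrightarrow> u < of_rat q \<longleftrightarrow> v < of_rat q"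
    for u v :: real
  proof -
    obtain q where "u < of_rat q" "of_rat q < v"
      using of_rat_dense \<open>u < v\<close> by blast
    moreover from this have "q > 0"
      using \<open>u \<ge> 0\<close> by (metis le_less_trans zero_less_of_rat_iff)
    ultimately show False
      using that(3) by auto
  qed
  with assms show ?thesis
    by (metis linorder_neqE_linordered_idom)
qed

context Metric_space
begin

lemma qf_equiv_iff_mdist_eq:
  assumes "set as \<subseteq> M" "set bs \<subseteq> M"
  shows "qf_equiv d as bs \<longleftrightarrow> length as = length bs \<and>
     (\<forall>i<length as. \<forall>j<length as. d (as ! i) (as ! j) = d (bs ! i) (bs ! j))"
proof
  assume qf: "qf_equiv d as bs"
  then have "d (as ! i) (as ! j) = d (bs ! i) (bs ! j)"
    if "i < length as" "j < length as" for i j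
    using that by (intro eq_if_same_positive_rat_bounds) (auto simp: qf_equiv_def)
  with qf show "length as = length bs \<and>
     (\<forall>i<length as. \<forall>j<length as. d (as ! i) (as ! j) = d (bs ! i) (bs ! j))"
    by (simp add: qf_equiv_def)
next
  assume dist: "length as = length bs \<and>
     (\<forall>i<length as. \<forall>j<length as. d (as ! i) (as ! j) = d (bs ! i) (bs ! j))"
  have "as ! i = as ! j \<longleftrightarrow> bs ! i = bs ! j" if "i < length as" "j < length as" for i j
    using that dist assms zero[of "as ! i" "as ! j"] zero[of "bs ! i" "bs ! j"]
    by (metis nth_mem subsetD)
  with dist show "qf_equiv d as bs"
    by (simp add: qf_equiv_def)
qed

lemma limitin_mdist:
  assumes "limitin mtopology f a F" "limitin mtopology g b F"
  shows "((\<lambda>x. d (f x) (g x)) \<longlongrightarrow> d a b) F"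
proof -
  from assms have "a \<in> M" "b \<in> M" and in_M: "\<forall>\<^sub>F x in F. f x \<in> M \<and> g x \<in> M"
    and null: "((\<lambda>x. d (f x) a) \<longlongrightarrow> 0) F" "((\<lambda>x. d (g x) b) \<longlongrightarrow> 0) F"
    by (auto simp: limitin_metric_dist_null eventually_conj_iff)
  have "norm (d u v - d a b) \<le> d u a + d v b" if "u \<in> M" "v \<in> M" for u v
    using triangle[OF that(1) \<open>a \<in> M\<close> that(2)] triangle[OF \<open>a \<in> M\<close> \<open>b \<in> M\<close> that(2)]
      triangle[OF \<open>a \<in> M\<close> that(1) \<open>b \<in> M\<close>] triangle[OF that(1) that(2) \<open>b \<in> M\<close>]
      commute[of a u] commute[of b v]
    unfolding real_norm_def abs_le_iff by linarith
  with in_M have "\<forall>\<^sub>F x in F. norm (d (f x) (g x) - d a b) \<le> d (f x) a + d (g x) b"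
    by (auto elim: eventually_mono)
  moreover have "((\<lambda>x. d (f x) a + d (g x) b) \<longlongrightarrow> 0) F"
    using tendsto_add[OF null] by simp
  ultimately show ?thesis
    by (rule LIM_zero_cancel[OF Lim_null_comparison])
qed

definition tuples_limitin :: "(nat \<Rightarrow> 'a list) \<Rightarrow> 'a list \<Rightarrow> bool" where
  "tuples_limitin F L \<longleftrightarrow> (\<forall>k. set (F k) \<subseteq> M \<and> length (F k) = length L) \<and>
     (\<forall>i<length L. limitin mtopology (\<lambda>k. F k ! i) (L ! i) sequentially)"

lemma tuples_limitin_subset: "tuples_limitin F L \<Longrightarrow> set L \<subseteq> M"
  unfolding tuples_limitin_def by (metis in_set_conv_nth limitin_mspace subsetI)

lemma tuples_limitin_const: "set L \<subseteq> M \<Longrightarrow> tuples_limitin (\<lambda>k. L) L"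
  unfolding tuples_limitin_def by auto

lemma tuples_limitin_subsequence:
  assumes "tuples_limitin F L" "strict_mono r"
  shows "tuples_limitin (F \<circ> r) L"
proof -
  have "limitin mtopology (\<lambda>k. F (r k) ! i) (L ! i) sequentially" if "i < length L" for i
    using limitin_subsequence[OF assms(2), of mtopology "\<lambda>k. F k ! i"] assms(1) that
    by (simp add: tuples_limitin_def o_def)
  with assms(1) show ?thesis
    by (simp add: tuples_limitin_def)
qed

lemma tuples_limitin_snoc:
  assumes "tuples_limitin F L" "limitin mtopology f x sequentially" "\<And>k. f k \<in> M"
  shows "tuples_limitin (\<lambda>k. F k @ [f k]) (L @ [x])"
  using assms unfolding tuples_limitin_def by (auto simp: nth_append less_Suc_eq)

lemma qf_equiv_closed:
  assumes "tuples_limitin F as" "tuples_limitin G bs" "\<And>k. qf_equiv d (F k) (G k)"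
  shows "qf_equiv d as bs"
proof -
  have "set (F k) \<subseteq> M" "set (G k) \<subseteq> M" for k
    using assms(1,2) by (auto simp: tuples_limitin_def)
  with assms(3) have dist: "length (F k) = length (G k) \<and>
      (\<forall>i<length (F k). \<forall>j<length (F k). d (F k ! i) (F k ! j) = d (G k ! i) (G k ! j))" for k
    by (simp add: qf_equiv_iff_mdist_eq)
  have len_F: "length (F k) = length as" and len_G: "length (G k) = length bs" for k
    using assms(1,2) by (auto simp: tuples_limitin_def)
  with dist have len: "length as = length bs" by metis
  have "d (as ! i) (as ! j) = d (bs ! i) (bs ! j)" if "i < length as" "j < length as" for i j
  proof (rule tendsto_unique[OF trivial_limit_sequentially])
    show "((\<lambda>k. d (F k ! i) (F k ! j)) \<longlongrightarrow> d (as ! i) (as ! j)) sequentially"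
      using assms(1) that by (intro limitin_mdist) (auto simp: tuples_limitin_def)
    have "(\<lambda>k. d (F k ! i) (F k ! j)) = (\<lambda>k. d (G k ! i) (G k ! j))"
      using dist len_F that by simp
    then show "((\<lambda>k. d (F k ! i) (F k ! j)) \<longlongrightarrow> d (bs ! i) (bs ! j)) sequentially"
      using assms(2) that len by (simp add: limitin_mdist tuples_limitin_def)
  qed
  with len show ?thesis
    by (simp add: qf_equiv_iff_mdist_eq assms(1,2)[THEN tuples_limitin_subset])
qed

lemma bf_equiv_closed:
  assumes "compact_space mtopology"
    and "tuples_limitin F as" "tuples_limitin G bs" "\<And>k. bf_equiv M d n (F k) (G k)"
  shows "bf_equiv M d n as bs"
  using assms(2-4)
proof (induction n arbitrary: as bs F G)
  case 0
  then show ?case by (simp add: qf_equiv_closed)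
next
  case (Suc n)
  have forth: "\<forall>x\<in>M. \<exists>y\<in>M. bf_equiv M d n (as' @ [x]) (bs' @ [y])"
    if lim: "tuples_limitin F' as'" "tuples_limitin G' bs'"
      and equiv: "\<And>k. bf_equiv M d (Suc n) (F' k) (G' k)" for as' bs' F' G'
  proof
    fix x assume "x \<in> M"
    with equiv have "\<forall>k. \<exists>y\<in>M. bf_equiv M d n (F' k @ [x]) (G' k @ [y])"
      unfolding bf_equiv.simps(2) by blast
    then obtain y where y: "\<And>k. y k \<in> M" "\<And>k. bf_equiv M d n (F' k @ [x]) (G' k @ [y k])"
      by metis
    then obtain r l where r: "strict_mono r" "l \<in> M" "limitin mtopology (y \<circ> r) l sequentially"
      using assms(1) unfolding compact_space_sequentially by (metis image_subset_iff)
    have "bf_equiv M d n (as' @ [x]) (bs' @ [l])"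
    proof (rule Suc.IH)
      show "tuples_limitin (\<lambda>k. (F' \<circ> r) k @ [x]) (as' @ [x])"
        using \<open>x \<in> M\<close> by (intro tuples_limitin_snoc tuples_limitin_subsequence lim r) auto
      show "tuples_limitin (\<lambda>k. (G' \<circ> r) k @ [(y \<circ> r) k]) (bs' @ [l])"
        using y by (intro tuples_limitin_snoc tuples_limitin_subsequence lim r) auto
    qed (simp add: y)
    with \<open>l \<in> M\<close> show "\<exists>y\<in>M. bf_equiv M d n (as' @ [x]) (bs' @ [y])" ..
  qed
  have "bf_equiv M d (Suc n) (G k) (F k)" for k
    using Suc.prems(3) by (rule bf_equiv_sym)
  with forth[OF Suc.prems] forth[OF Suc.prems(2,1)] show ?case
    unfolding bf_equiv_Suc_iff by blast
qed

lemma bf_equiv_omega_imp_plus1: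
  assumes "compact_space mtopology" "set as \<subseteq> M" "set bs \<subseteq> M" "bf_equiv_omega M d as bs"
  shows "bf_equiv_omega_plus1 M d as bs"
proof -
  have forth: "\<forall>x\<in>M. \<exists>y\<in>M. bf_equiv_omega M d (as' @ [x]) (bs' @ [y])"
    if "set as' \<subseteq> M" "set bs' \<subseteq> M" "bf_equiv_omega M d as' bs'" for as' bs'
  proof
    fix x assume "x \<in> M"
    have "\<exists>y\<in>M. bf_equiv M d n (as' @ [x]) (bs' @ [y])" for n
      using that(3) \<open>x \<in> M\<close> unfolding bf_equiv_omega_def by (meson bf_equiv.simps(2))
    then obtain y where y: "\<And>n. y n \<in> M" "\<And>n. bf_equiv M d n (as' @ [x]) (bs' @ [y n])"
      by metis
    then obtain r l where r: "strict_mono r" "l \<in> M" "limitin mtopology (y \<circ> r) l sequentially"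
      using assms(1) unfolding compact_space_sequentially by (metis image_subset_iff)
    have "bf_equiv M d m (as' @ [x]) (bs' @ [l])" for m
    proof (rule bf_equiv_closed[OF assms(1)])
      show "tuples_limitin (\<lambda>k. as' @ [x]) (as' @ [x])"
        using that \<open>x \<in> M\<close> by (simp add: tuples_limitin_const)
      show "tuples_limitin (\<lambda>k. bs' @ [y (r (k + m))]) (bs' @ [l])"
        using limitin_sequentially_offset[OF r(3), of m] that y
        by (intro tuples_limitin_snoc tuples_limitin_const) (auto simp: o_def)
      show "bf_equiv M d m (as' @ [x]) (bs' @ [y (r (k + m))])" for k
      proof (rule bf_equiv_antimono[OF _ _ _ y(2)])
        show "m \<le> r (k + m)"
          using seq_suble[OF r(1), of "k + m"] by linarith
      qed (use that \<open>x \<in> M\<close> y in auto)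
    qed
    with \<open>l \<in> M\<close> show "\<exists>y\<in>M. bf_equiv_omega M d (as' @ [x]) (bs' @ [y])"
      unfolding bf_equiv_omega_def by blast
  qed
  have "bf_equiv_omega M d bs as"
    using assms(4) bf_equiv_sym unfolding bf_equiv_omega_def by blast
  with forth[OF assms(2-4)] forth[OF assms(3,2)] show ?thesis
    unfolding bf_equiv_omega_plus1_iff by blast
qed

end

theorem mainTheorem6:
  fixes M :: "'a set" and d :: "'a \<Rightarrow> 'a \<Rightarrow> real"
  assumes "Metric_space M d"
    and "compact_space (Metric_space.mtopology M d)"
  shows "scott_rank_le_omega M d"
  unfolding scott_rank_le_omega_def
  using Metric_space.bf_equiv_omega_imp_plus1[OF assms] by blast

end
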